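(* Let $G$ be a finite graph, $(X^+,X^-)$ a pair of subsets of $V(G)$, $c\in V(G)$ and $r$ an integer such that $X^+\subseteq B_G(c,r)$ and $X^-\cap B_G(c,r)=\emptyset$. Let $X=X^+\cup X^-$, let $(A_1,A_2)$ be a separation of $G$ with $c\in A_1$ and $X\subseteq A_2$, and let $S=A_1\cap A_2$. Then \[A_2\cap\bigcup_{v\in S}B_G(v,r^+(v))\subseteq A_2\cap B_G(c,r)\subseteq A_2\cap\bigcup_{v\in S}B_G(v,r^-(v)-1).\]
   Context: $\mathrm{dist}_G$ is shortest-path distance ($\infty$ between different components), and $B_G(v,\rho)=\{w\in V(G):\mathrm{dist}_G(v,w)\le\rho\}$ for $\rho\in\mathbb{Z}\cup\{\pm\infty\}$ (balls of negative radius are empty; $\infty-1=\infty$, $r-\infty=-\infty$). A separation of $G$ is a pair $(A_1,A_2)$ with $A_1\cup A_2=V(G)$ and no edge between $A_1\setminus A_2$ and $A_2\setminus A_1$. Conventions: $\min\emptyset=\infty$, $\max\emptyset=-1$. For $v\in V(G)$: $r^+(v)=\max\{\mathrm{dist}_G(v,x):x\in X\cap B_G(v,r-\mathrm{dist}_G(c,v))\}$ and $r^-(v)=\min\{\mathrm{dist}_G(v,x):x\in X^-\}$. *)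

theory Defs
  imports "HOL-Library.Extended_Real"
begin

definition fin_graph :: "'a set \<Rightarrow> ('a \<Rightarrow> 'a \<Rightarrow> bool) \<Rightarrow> bool" where
  "fin_graph V E \<longleftrightarrow> finite V \<and> (\<forall>x y. E x y \<longrightarrow> x \<in> V \<and> y \<in> V)
     \<and> (\<forall>x y. E x y \<longrightarrow> E y x) \<and> (\<forall>x. \<not> E x x)"

definition edge_rel :: "'a set \<Rightarrow> ('a \<Rightarrow> 'a \<Rightarrow> bool) \<Rightarrow> ('a \<times> 'a) set" where
  "edge_rel V E = {(x, y). x \<in> V \<and> y \<in> V \<and> E x y}"

text \<open>Shortest-path distance, valued in extended reals; infinity if no path.\<close>
definition gdist :: "'a set \<Rightarrow> ('a \<Rightarrow> 'a \<Rightarrow> bool) \<Rightarrow> 'a \<Rightarrow> 'a \<Rightarrow> ereal" where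
  "gdist V E v w = (INF n \<in> {n. (v, w) \<in> edge_rel V E ^^ n}. ereal (real n))"

definition gball :: "'a set \<Rightarrow> ('a \<Rightarrow> 'a \<Rightarrow> bool) \<Rightarrow> 'a \<Rightarrow> ereal \<Rightarrow> 'a set" where
  "gball V E v \<rho> = {w \<in> V. gdist V E v w \<le> \<rho>}"

definition separation :: "'a set \<Rightarrow> ('a \<Rightarrow> 'a \<Rightarrow> bool) \<Rightarrow> 'a set \<Rightarrow> 'a set \<Rightarrow> bool" where
  "separation V E A1 A2 \<longleftrightarrow> A1 \<subseteq> V \<and> A2 \<subseteq> V \<and> A1 \<union> A2 = V \<and>
     (\<forall>x y. x \<in> A1 - A2 \<longrightarrow> y \<in> A2 - A1 \<longrightarrow> \<not> E x y)"

definition emax :: "ereal set \<Rightarrow> ereal" where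
  "emax S = (if S = {} then -1 else Sup S)"

definition emin :: "ereal set \<Rightarrow> ereal" where
  "emin S = (if S = {} then \<infinity> else Inf S)"

definition rplus :: "'a set \<Rightarrow> ('a \<Rightarrow> 'a \<Rightarrow> bool) \<Rightarrow> 'a set \<Rightarrow> 'a \<Rightarrow> int \<Rightarrow> 'a \<Rightarrow> ereal" where
  "rplus V E X c r v =
     emax (gdist V E v ` (X \<inter> gball V E v (ereal (real_of_int r) - gdist V E c v)))"

definition rminus :: "'a set \<Rightarrow> ('a \<Rightarrow> 'a \<Rightarrow> bool) \<Rightarrow> 'a set \<Rightarrow> 'a \<Rightarrow> ereal" where
  "rminus V E Xm v = emin (gdist V E v ` Xm)"

end

theory Submission
  imports Defs
begin

text \<open>Upper bound: a vertex w in the ball of radius r^+(v) around v is within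
  r - d(c,v) of v, since r^+(v) is a maximum over such distances, so the triangle
  inequality through v puts w into B(c,r).
  Lower bound: a geodesic from c to w \<in> A_2 \<inter> B(c,r) has to cross the separator
  in some v. Every x \<in> X^- lies outside B(c,r), so the triangle inequality through v
  gives d(v,w) < d(v,x); distances being integers, d(v,w) \<le> r^-(v) - 1.\<close>

lemma gdist_le_relpow: "(v, w) \<in> edge_rel V E ^^ n \<Longrightarrow> gdist V E v w \<le> ereal (real n)"
  unfolding gdist_def by (rule INF_lower) simp

lemma gdist_cases [case_names unreachable path]:
  obtains "gdist V E v w = \<infinity>"
  | n where "gdist V E v w = ereal (real n)" "(v, w) \<in> edge_rel V E ^^ n"
proof (cases "\<exists>n. (v, w) \<in> edge_rel V E ^^ n")
  case True
  define n where "n = (LEAST n. (v, w) \<in> edge_rel V E ^^ n)"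
  have path: "(v, w) \<in> edge_rel V E ^^ n"
    using True unfolding n_def by (rule LeastI_ex)
  have "ereal (real n) \<le> gdist V E v w"
    unfolding gdist_def by (rule INF_greatest) (simp add: n_def Least_le)
  with gdist_le_relpow[OF path] have "gdist V E v w = ereal (real n)"
    by (rule antisym)
  then show thesis using path by (rule that(2))
next
  case False
  then have "gdist V E v w = \<infinity>"
    unfolding gdist_def by (simp add: top_ereal_def)
  then show thesis by (rule that(1))
qed

lemma gdist_nonneg: "0 \<le> gdist V E v w"
  by (cases V E v w rule: gdist_cases) auto

lemma gdist_triangle: "gdist V E u w \<le> gdist V E u v + gdist V E v w"
proof (cases V E u v rule: gdist_cases)
  case unreachable
  then show ?thesis using gdist_nonneg[of V E v w] by simp
next
  case (path m)
  show ?thesis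
  proof (cases V E v w rule: gdist_cases)
    case unreachable
    then show ?thesis using gdist_nonneg[of V E u v] by simp
  next
    case (path n)
    with \<open>(u, v) \<in> edge_rel V E ^^ m\<close> have "(u, w) \<in> edge_rel V E ^^ (m + n)"
      by (simp add: relpow_add relcomp.relcompI)
    then have "gdist V E u w \<le> ereal (real (m + n))"
      by (rule gdist_le_relpow)
    with path \<open>gdist V E u v = ereal (real m)\<close> show ?thesis by simp
  qed
qed

lemma gdist_less_imp_add_one_le:
  assumes "gdist V E v w < gdist V E v x"
  shows "gdist V E v w + 1 \<le> gdist V E v x"
  using assms
  by (cases V E v w rule: gdist_cases; cases V E v x rule: gdist_cases) auto

lemma separation_relpow_crosses:
  assumes "separation V E A1 A2"
  shows "(c, w) \<in> edge_rel V E ^^ n \<Longrightarrow> c \<in> A1 \<Longrightarrow> w \<in> A2 \<Longrightarrow>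
    \<exists>k\<le>n. \<exists>v\<in>A1 \<inter> A2. (c, v) \<in> edge_rel V E ^^ k \<and> (v, w) \<in> edge_rel V E ^^ (n - k)"
proof (induction n arbitrary: c)
  case 0
  then show ?case by auto
next
  case (Suc n)
  show ?case
  proof (cases "c \<in> A2")
    case True
    with Suc.prems show ?thesis by (intro exI[of _ 0]) auto
  next
    case False
    obtain y where y: "(c, y) \<in> edge_rel V E" "(y, w) \<in> edge_rel V E ^^ n"
      using Suc.prems(1) relpow_Suc_D2 by metis
    then have "y \<in> V" "E c y" by (auto simp: edge_rel_def)
    with assms False Suc.prems(2) have "y \<in> A1"
      unfolding separation_def by blast
    then obtain k v where kv: "k \<le> n" "v \<in> A1 \<inter> A2" "(y, v) \<in> edge_rel V E ^^ k"
        "(v, w) \<in> edge_rel V E ^^ (n - k)"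
      using Suc.IH[OF y(2)] Suc.prems(3) by blast
    from y(1) kv(3) have "(c, v) \<in> edge_rel V E ^^ Suc k"
      by (rule relpow_Suc_I2)
    with kv show ?thesis by (intro exI[of _ "Suc k"]) auto
  qed
qed

lemma separation_geodesic_crosses:
  assumes "separation V E A1 A2" "c \<in> A1" "w \<in> A2" "gdist V E c w \<noteq> \<infinity>"
  obtains v where "v \<in> A1 \<inter> A2" "gdist V E c v + gdist V E v w \<le> gdist V E c w"
proof -
  obtain n where n: "gdist V E c w = ereal (real n)" "(c, w) \<in> edge_rel V E ^^ n"
    using assms(4) by (cases V E c w rule: gdist_cases) auto
  obtain k v where kv: "k \<le> n" "v \<in> A1 \<inter> A2" "(c, v) \<in> edge_rel V E ^^ k"
      "(v, w) \<in> edge_rel V E ^^ (n - k)"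
    using separation_relpow_crosses[OF assms(1) n(2) assms(2,3)] by blast
  have "gdist V E c v + gdist V E v w \<le> ereal (real k) + ereal (real (n - k))"
    using kv(3,4) by (intro add_mono gdist_le_relpow)
  also have "\<dots> = gdist V E c w"
    using n(1) kv(1) by (simp add: of_nat_diff)
  finally show thesis by (rule that[OF kv(2)])
qed

lemma gball_rplus_subset: "gball V E v (rplus V E X c r v) \<subseteq> gball V E c (ereal (real_of_int r))"
proof
  fix w
  assume "w \<in> gball V E v (rplus V E X c r v)"
  then have w: "w \<in> V" "gdist V E v w \<le> rplus V E X c r v"
    unfolding gball_def by auto
  define T where "T = X \<inter> gball V E v (ereal (real_of_int r) - gdist V E c v)"
  have "T \<noteq> {}"
  proof
    assume "T = {}"
    then have "rplus V E X c r v = -1"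
      unfolding rplus_def emax_def T_def by simp
    then have "(0::ereal) \<le> -1"
      using order_trans[OF gdist_nonneg[of V E v w] w(2)] by simp
    then show False by simp
  qed
  then have "rplus V E X c r v = Sup (gdist V E v ` T)"
    unfolding rplus_def emax_def T_def by simp
  also have "\<dots> \<le> ereal (real_of_int r) - gdist V E c v"
    by (rule SUP_least) (auto simp: T_def gball_def)
  finally have "gdist V E v w \<le> ereal (real_of_int r) - gdist V E c v"
    using w(2) by simp
  with gdist_nonneg[of V E v w] have "gdist V E c v + gdist V E v w \<le> ereal (real_of_int r)"
    using gdist_nonneg[of V E c v] by (auto simp: ereal_le_minus_iff add.commute)
  with gdist_triangle[of V E c w v] w(1) show "w \<in> gball V E c (ereal (real_of_int r))"
    unfolding gball_def by simp
qed

lemma le_emin_minus_one: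
  fixes b :: ereal
  assumes "\<bar>b\<bar> \<noteq> \<infinity>" "\<And>s. s \<in> S \<Longrightarrow> b + 1 \<le> s"
  shows "b \<le> emin S - 1"
proof (cases "S = {}")
  case True
  then show ?thesis by (simp add: emin_def)
next
  case False
  from assms(2) have "b + 1 \<le> Inf S" by (rule Inf_greatest)
  with False show ?thesis by (simp add: emin_def ereal_le_minus)
qed

lemma gball_subset_Union_gball_rminus:
  assumes "separation V E A1 A2" "c \<in> A1"
    and "Xm \<subseteq> V" "Xm \<inter> gball V E c (ereal (real_of_int r)) = {}"
  shows "A2 \<inter> gball V E c (ereal (real_of_int r))
    \<subseteq> (\<Union>v \<in> A1 \<inter> A2. gball V E v (rminus V E Xm v - 1))"
proof
  fix w
  assume "w \<in> A2 \<inter> gball V E c (ereal (real_of_int r))"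
  then have w: "w \<in> A2" "w \<in> V" "gdist V E c w \<le> ereal (real_of_int r)"
    unfolding gball_def by auto
  then have "gdist V E c w \<noteq> \<infinity>" by auto
  with assms(1,2) w(1) obtain v where v: "v \<in> A1 \<inter> A2"
      and geodesic: "gdist V E c v + gdist V E v w \<le> ereal (real_of_int r)"
    using w(3) by (metis order_trans separation_geodesic_crosses)
  have vw_finite: "\<bar>gdist V E v w\<bar> \<noteq> \<infinity>"
    using geodesic gdist_nonneg[of V E c v] gdist_nonneg[of V E v w] by auto
  have "gdist V E v w + 1 \<le> gdist V E v x" if "x \<in> Xm" for x
  proof (rule gdist_less_imp_add_one_le)
    from that assms(3,4) have "ereal (real_of_int r) < gdist V E c x"
      unfolding gball_def by auto
    with geodesic gdist_triangle[of V E c x v]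
    have "gdist V E c v + gdist V E v w < gdist V E c v + gdist V E v x"
      by order
    then show "gdist V E v w < gdist V E v x"
      by (meson add_left_mono not_le)
  qed
  then have "gdist V E v w \<le> rminus V E Xm v - 1"
    unfolding rminus_def using vw_finite by (intro le_emin_minus_one) auto
  with v w(2) show "w \<in> (\<Union>v \<in> A1 \<inter> A2. gball V E v (rminus V E Xm v - 1))"
    unfolding gball_def by blast
qed

theorem lemma5p2:
  fixes V :: "'a set" and E :: "'a \<Rightarrow> 'a \<Rightarrow> bool"
    and Xp Xm A1 A2 :: "'a set" and c :: 'a and r :: int
  assumes "fin_graph V E"
    and "Xp \<subseteq> V" and "Xm \<subseteq> V" and "c \<in> V"
    and "Xp \<subseteq> gball V E c (ereal (real_of_int r))"
    and "Xm \<inter> gball V E c (ereal (real_of_int r)) = {}"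
    and "separation V E A1 A2" and "c \<in> A1" and "Xp \<union> Xm \<subseteq> A2"
  shows "A2 \<inter> (\<Union>v \<in> A1 \<inter> A2. gball V E v (rplus V E (Xp \<union> Xm) c r v))
           \<subseteq> A2 \<inter> gball V E c (ereal (real_of_int r))
       \<and> A2 \<inter> gball V E c (ereal (real_of_int r))
           \<subseteq> A2 \<inter> (\<Union>v \<in> A1 \<inter> A2. gball V E v (rminus V E Xm v - 1))"
  using gball_rplus_subset[of V E _ "Xp \<union> Xm" c r]
    gball_subset_Union_gball_rminus[OF assms(7,8,3,6)]
  by blast

end
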